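(* Let $\mathcal A=\{0,1,2\}$ and $$X_{\mathcal F}=\Big\{x\in\{0,1,2\}^{\mathbb N}:\ \text{for all } i,n\in\mathbb N,\ x_ix_{i+1}\notin\{12,21\}\ \text{and}\ \#\{0\le j<n: x_{i+j}x_{i+j+1}\in\{00,11,22\}\}\le 100+\ln n\Big\},$$ with the left shift $\sigma$. Let $\mathcal G=\bigcup_{n\in\mathbb N}\{0a_10a_2\cdots0a_n: a_i\in\{1,2\}\}$. Then $\mathcal G\subset\mathcal L(X_{\mathcal F})$, $\mathcal G$ has $(W)$-specification, $\mathcal L(X_{\mathcal F})$ is edit approachable by $\mathcal G$, and $(X_{\mathcal F},\sigma)$ does not have the approximate product property.
   Context: $\{0,1,2\}^{\mathbb N}$ carries the metric $d(x,y)=\sum_{j\ge1}|x_j-y_j|2^{-j}$; $\mathcal L(X)$ is the set of finite words occurring in points of $X$. $\mathcal G\subset\mathcal L$ has $(W)$-specification if there is $\tau\in\mathbb N$ such that for all $u,v\in\mathcal G$ there is $w\in\mathcal L$ with $|w|\le\tau$ and $uwv\in\mathcal G$. The edit distance $\hat d(v,w)$ is the minimal number of single-symbol substitutions, insertions or deletions transforming $v$ into $w$; $\mathcal L$ is edit approachable by $\mathcal G$ if there is a nondecreasing $g:\mathbb N\to\mathbb N$ with $g(n)/n\to0$ such that every $w\in\mathcal L$ has $v\in\mathcal G$ with $\hat d(w,v)\le g(|w|)$. A dynamical system $(X,T)$ on a compact metric space has the approximate product property if for all $\delta_1,\delta_2,\epsilon>0$ there is $M(\delta_1,\delta_2,\epsilon)>0$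 such that for every $n\ge M$, every $k\in\mathbb N$ and all points $x_1,\dots,x_k\in X$ there exist $0=t_0<t_1<\dots<t_k$ with $n\le t_i-t_{i-1}\le(1+\delta_1)n$ and $z\in X$ such that $\#\{0\le j<n: d(T^{t_{i-1}+j}z,T^jx_i)>\epsilon\}<\delta_2n$ for each $i=1,\dots,k$. *)

theory Defs
  imports "HOL-Analysis.Analysis"
begin

text \<open>Points of {0,1,2}^N are functions nat => nat; index j (from 0) stands for the
  coordinate x_(j+1) of the paper.\<close>

definition seq_metric :: "(nat \<Rightarrow> nat) \<Rightarrow> (nat \<Rightarrow> nat) \<Rightarrow> real" where
  "seq_metric x y = (\<Sum>j. \<bar>real (x j) - real (y j)\<bar> / 2 ^ (Suc j))"

definition shift :: "(nat \<Rightarrow> nat) \<Rightarrow> (nat \<Rightarrow> nat)" where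
  "shift x = (\<lambda>j. x (Suc j))"

definition language :: "(nat \<Rightarrow> nat) set \<Rightarrow> nat list set" where
  "language X = {w. \<exists>x\<in>X. \<exists>i. w = map x [i..<i + length w]}"

definition W_specification :: "nat list set \<Rightarrow> nat list set \<Rightarrow> bool" where
  "W_specification G L \<longleftrightarrow>
     (\<exists>\<tau>::nat. \<forall>u\<in>G. \<forall>v\<in>G. \<exists>w\<in>L. length w \<le> \<tau> \<and> u @ w @ v \<in> G)"

definition edit_step :: "'a list \<Rightarrow> 'a list \<Rightarrow> bool" where
  "edit_step v w \<longleftrightarrow>
     (\<exists>xs ys a b. v = xs @ [a] @ ys \<and> w = xs @ [b] @ ys) \<or>
     (\<exists>xs ys b. v = xs @ ys \<and> w = xs @ [b] @ ys) \<or>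
     (\<exists>xs ys a. v = xs @ [a] @ ys \<and> w = xs @ ys)"

definition edit_dist :: "'a list \<Rightarrow> 'a list \<Rightarrow> nat" where
  "edit_dist v w = (LEAST k. (edit_step ^^ k) v w)"

definition edit_approachable :: "nat list set \<Rightarrow> nat list set \<Rightarrow> bool" where
  "edit_approachable L G \<longleftrightarrow>
     (\<exists>g::nat \<Rightarrow> nat. mono g \<and> (\<lambda>n. real (g n) / real n) \<longlonglongrightarrow> 0 \<and>
        (\<forall>w\<in>L. \<exists>v\<in>G. edit_dist w v \<le> g (length w)))"

definition approx_product_property :: "'a set \<Rightarrow> ('a \<Rightarrow> 'a) \<Rightarrow> ('a \<Rightarrow> 'a \<Rightarrow> real) \<Rightarrow> bool" where
  "approx_product_property X T d \<longleftrightarrow>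
     (\<forall>\<delta>1>0. \<forall>\<delta>2>0. \<forall>\<epsilon>>0. \<exists>M::real. M > 0 \<and>
       (\<forall>n::nat. real n \<ge> M \<longrightarrow> (\<forall>k::nat. k \<ge> 1 \<longrightarrow> (\<forall>xs::nat \<Rightarrow> 'a. (\<forall>i\<in>{1..k}. xs i \<in> X) \<longrightarrow>
         (\<exists>t::nat \<Rightarrow> nat. t 0 = 0 \<and>
            (\<forall>i\<in>{1..k}. t (i - 1) < t i \<and> n \<le> t i - t (i - 1) \<and>
                          real (t i - t (i - 1)) \<le> (1 + \<delta>1) * real n) \<and>
            (\<exists>z\<in>X. \<forall>i\<in>{1..k}.
               real (card {j. j < n \<and> d ((T ^^ (t (i - 1) + j)) z) ((T ^^ j) (xs i)) > \<epsilon>})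
                 < \<delta>2 * real n))))))"

definition XF :: "(nat \<Rightarrow> nat) set" where
  "XF = {x. (\<forall>j. x j \<in> {0,1,2}) \<and>
            (\<forall>i. (x i, x (Suc i)) \<notin> {(1,2),(2,1)}) \<and>
            (\<forall>i n. n \<ge> 1 \<longrightarrow>
               real (card {j. j < n \<and> (x (i + j), x (i + j + 1)) \<in> {(0,0),(1,1),(2,2)}})
                 \<le> 100 + ln (real n))}"

definition GF :: "nat list set" where
  "GF = {concat (map (\<lambda>a. [0, a]) as) | as. as \<noteq> [] \<and> set as \<subseteq> {1,2}}"

end

theory Submission
  imports Defs
begin

text \<open>
  Deleting one letter of every repeated pair turns a word of the language into a word alternating
  between \<open>0\<close> and nonzero letters, because \<open>12\<close> and \<open>21\<close> are forbidden; at most two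
  insertions then give a word of \<open>GF\<close>. A word of length \<open>n\<close> has at most \<open>100 + ln n\<close>
  repeated pairs, so this is an edit approximation. Since \<open>GF\<close> is closed under concatenation,
  specification holds with empty connecting words.

  Against the approximate product property, shadow \<open>k\<close> times the orbit segment of length \<open>n\<close>
  of the point \<open>0101\<dots>\<close> whose phase slips once in the middle of the segment. A point of \<open>XF\<close>
  without a repeated pair inside a segment alternates there, hence misses the target at half the
  positions; so the shadowing point has a repeated pair in each of the \<open>k\<close> segments, i.e.
  \<open>k\<close> repeats within length \<open>2nk\<close>. For \<open>k \<approx> 4n\<close> this beats the bound \<open>100 + ln (2nk)\<close>.
\<close>

lemma edit_dist_le: "(edit_step ^^ k) v w \<Longrightarrow> edit_dist v w \<le> k"
  unfolding edit_dist_def by (rule Least_le)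

lemma edit_step_insert: "edit_step (xs @ ys) (xs @ b # ys)"
  unfolding edit_step_def by (intro disjI2 disjI1 exI) simp

lemma edit_step_delete: "edit_step (xs @ a # ys) (xs @ ys)"
  unfolding edit_step_def by (intro disjI2 exI) simp

lemma edit_step_Cons: "edit_step v w \<Longrightarrow> edit_step (a # v) (a # w)"
  unfolding edit_step_def by (elim disjE exE conjE; simp; metis append_Cons)

lemma edit_steps_Cons: "(edit_step ^^ k) v w \<Longrightarrow> (edit_step ^^ k) (a # v) (a # w)"
proof (induction k arbitrary: w)
  case (Suc k)
  then show ?case by (metis edit_step_Cons relpowp_Suc_E relpowp_Suc_I)
qed simp

definition adjacent_repeats :: "'a list \<Rightarrow> nat" where
  "adjacent_repeats w = card {j. Suc j < length w \<and> w ! j = w ! Suc j}"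

lemma adjacent_repeats_Cons_Cons:
  "adjacent_repeats (a # b # w) = (if a = b then 1 else 0) + adjacent_repeats (b # w)"
proof -
  let ?R = "\<lambda>w. {j. Suc j < length w \<and> w ! j = w ! Suc j}"
  have split: "?R (a # b # w) = (if a = b then {0} else {}) \<union> Suc ` ?R (b # w)"
  proof (rule set_eqI)
    show "j \<in> ?R (a # b # w) \<longleftrightarrow> j \<in> (if a = b then {0} else {}) \<union> Suc ` ?R (b # w)" for j
      by (cases j) auto
  qed
  have "0 \<notin> Suc ` ?R (b # w)" by auto
  moreover have "finite (?R (b # w))" by auto
  ultimately show ?thesis
    unfolding adjacent_repeats_def split by (simp add: card_image)
qed

lemma edit_steps_remdups_adj: "(edit_step ^^ adjacent_repeats w) w (remdups_adj w)"
proof (induction w rule: remdups_adj.induct)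
  case (3 a b w)
  show ?case
  proof (cases "a = b")
    case True
    have "edit_step (a # b # w) (a # w)" using edit_step_delete[of "[a]"] by simp
    from relpowp_Suc_I2[OF this "3.IH"(1)[OF True]] True show ?thesis
      by (simp add: adjacent_repeats_Cons_Cons)
  next
    case False
    with 3 show ?thesis by (simp add: adjacent_repeats_Cons_Cons edit_steps_Cons)
  qed
qed (simp_all add: adjacent_repeats_def)

section \<open>Words alternating between zero and nonzero letters\<close>

definition interleave_zeros :: "nat list \<Rightarrow> nat list" where
  "interleave_zeros as = concat (map (\<lambda>a. [0, a]) as)"

lemma interleave_zeros_simps [simp]:
  "interleave_zeros [] = []"
  "interleave_zeros (a # as) = 0 # a # interleave_zeros as"
  "interleave_zeros (as @ bs) = interleave_zeros as @ interleave_zeros bs"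
  by (simp_all add: interleave_zeros_def)

lemma interleave_zeros_length [simp]: "length (interleave_zeros as) = 2 * length as"
  by (induction as) simp_all

lemma interleave_zeros_nth:
  "j < length (interleave_zeros as) \<Longrightarrow>
     interleave_zeros as ! j = (if even j then 0 else as ! (j div 2))"
proof (induction as arbitrary: j)
  case (Cons a as)
  consider "j = 0" | "j = 1" | l where "j = Suc (Suc l)"
    by (metis One_nat_def not0_implies_Suc)
  then show ?case
  proof cases
    case 3
    with Cons.prems have "l < length (interleave_zeros as)" by simp
    from Cons.IH[OF this] 3 show ?thesis by simp
  qed simp_all
qed simp

lemma GF_iff: "v \<in> GF \<longleftrightarrow> (\<exists>as. v = interleave_zeros as \<and> as \<noteq> [] \<and> set as \<subseteq> {1,2})"
  by (simp add: GF_def interleave_zeros_def)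

lemma GF_append: "u \<in> GF \<Longrightarrow> v \<in> GF \<Longrightarrow> u @ v \<in> GF"
  unfolding GF_iff by (metis Nil_is_append_conv interleave_zeros_simps(3) le_sup_iff set_append)

lemma zero_alternating_decompose:
  assumes "successively (\<lambda>a b. (a = 0) \<noteq> (b = 0)) u" and "u \<noteq> [] \<Longrightarrow> hd u = 0"
  shows "u = interleave_zeros (filter (\<lambda>a. a \<noteq> 0) u) \<or>
         u = interleave_zeros (filter (\<lambda>a. a \<noteq> 0) u) @ [0]"
  using assms by (induction u rule: induct_list012) (auto simp: successively_Cons)

lemma zero_alternating_edit_GF:
  assumes alt: "successively (\<lambda>a b. (a = 0) \<noteq> (b = 0)) u" and letters: "set u \<subseteq> {0,1,2}"
  obtains v k where "v \<in> GF" "k \<le> 2" "(edit_step ^^ k) u v"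
proof -
  obtain u0 k0 where alt0: "successively (\<lambda>a b. (a = 0) \<noteq> (b = 0)) u0"
    and hd0: "u0 \<noteq> []" "hd u0 = 0" and letters0: "set u0 \<subseteq> {0,1,2}"
    and k0: "k0 \<le> 1" "(edit_step ^^ k0) u u0"
  proof (cases "u \<noteq> [] \<and> hd u = 0")
    case True
    then show ?thesis using that[of u 0] alt letters by simp
  next
    case False
    have "edit_step u (0 # u)" using edit_step_insert[of "[]"] by simp
    then show ?thesis
      using that[of "0 # u" 1] alt letters False by (auto simp: successively_Cons)
  qed
  define as where "as = filter (\<lambda>a. a \<noteq> 0) u0"
  have as: "set as \<subseteq> {1,2}" using letters0 by (auto simp: as_def)
  from zero_alternating_decompose[OF alt0] hd0
  consider "u0 = interleave_zeros as" | "u0 = interleave_zeros as @ [0]"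
    unfolding as_def by blast
  then show ?thesis
  proof cases
    case 1
    with hd0 as have "u0 \<in> GF" by (auto simp: GF_iff)
    with k0 show ?thesis using that[of u0 k0] by simp
  next
    case 2
    have "edit_step u0 (interleave_zeros (as @ [1]))"
      using edit_step_insert[of u0 "[]" 1] 2 by simp
    with k0(2) have steps: "(edit_step ^^ Suc k0) u (interleave_zeros (as @ [1]))"
      by (rule relpowp_Suc_I)
    have "interleave_zeros (as @ [1]) \<in> GF"
      using as unfolding GF_iff by (intro exI[of _ "as @ [1]"]) simp
    from that[OF this _ steps] k0(1) show ?thesis by simp
  qed
qed

lemma remdups_adj_zero_alternating:
  assumes "successively (\<lambda>a b. a \<noteq> b \<longrightarrow> (a = 0) \<noteq> (b = 0)) w"
  shows "successively (\<lambda>a b. (a = 0) \<noteq> (b = (0::'a::zero))) (remdups_adj w)"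
proof -
  have "successively (\<lambda>a b. a \<noteq> b \<longrightarrow> (a = 0) \<noteq> (b = 0)) (remdups_adj w)"
    using assms by (rule successively_remdups_adjI)
  with distinct_adj_remdups_adj[of w] show ?thesis
    by (auto simp: successively_conv_nth distinct_adj_conv_nth)
qed

section \<open>The shift space and its language\<close>

lemma XF_letters: "x \<in> XF \<Longrightarrow> x j \<in> {0,1,2}"
  unfolding XF_def by blast

lemma XF_le_2: "x \<in> XF \<Longrightarrow> x j \<le> 2"
  using XF_letters[of x j] by auto

lemma XF_zero_alternation:
  assumes "x \<in> XF" and "x j \<noteq> x (Suc j)"
  shows "(x j = 0) \<noteq> (x (Suc j) = 0)"
proof -
  have "x j \<in> {0,1,2}" "x (Suc j) \<in> {0,1,2}" "(x j, x (Suc j)) \<notin> {(1,2),(2,1)}"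
    using assms(1) unfolding XF_def by blast+
  with assms(2) show ?thesis by auto
qed

lemma XF_repeats_le:
  assumes "x \<in> XF" and "n \<ge> 1"
  shows "real (card {j. j < n \<and> x (i + j) = x (i + j + 1)}) \<le> 100 + ln (real n)"
proof -
  have "x (i + j) = x (i + j + 1) \<longleftrightarrow> (x (i + j), x (i + j + 1)) \<in> {(0,0),(1,1),(2,2)}" for j
    using XF_letters[OF assms(1), of "i + j"] by auto
  then show ?thesis using assms unfolding XF_def by simp
qed

lemma XF_intro_finite_repeats:
  assumes "\<forall>j. x j \<in> {0,1,2}" and "\<forall>j. (x j, x (Suc j)) \<notin> {(1,2),(2,1)}"
    and "finite {j. x j = x (Suc j)}" and "card {j. x j = x (Suc j)} \<le> 100"
  shows "x \<in> XF"
proof -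
  have bound: "real (card {j. j < n \<and> (x (i + j), x (i + j + 1)) \<in> {(0,0),(1,1),(2,2)}})
          \<le> 100 + ln (real n)" if "n \<ge> 1" for i n
  proof -
    have "card {j. j < n \<and> (x (i + j), x (i + j + 1)) \<in> {(0,0),(1,1),(2,2)}}
          \<le> card {j. x j = x (Suc j)}"
      by (rule card_inj_on_le[of "(+) i"]) (use assms(3) in auto)
    with assms(4) have "real (card {j. j < n \<and> (x (i + j), x (i + j + 1)) \<in> {(0,0),(1,1),(2,2)}})
                         \<le> 100" by simp
    moreover have "ln (real n) \<ge> 0" using that by simp
    ultimately show ?thesis by linarith
  qed
  show ?thesis
    unfolding XF_def mem_Collect_eq
    by (intro conjI allI impI assms(1)[rule_format] assms(2)[rule_format] bound)
qed

lemma zero_alternating_in_XF: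
  assumes "\<forall>j. x j \<in> {0,1,2}" and "\<forall>j. x j = 0 \<longleftrightarrow> even j"
  shows "x \<in> XF"
proof -
  have "(x j, x (Suc j)) \<notin> {(1,2),(2,1)} \<and> x j \<noteq> x (Suc j)" for j
    using assms(2)[rule_format, of j] assms(2)[rule_format, of "Suc j"] by auto
  then have "\<forall>j. (x j, x (Suc j)) \<notin> {(1,2),(2,1)}" and "{j. x j = x (Suc j)} = {}"
    by auto
  with assms(1) show ?thesis by (intro XF_intro_finite_repeats) auto
qed

lemma language_XF_letters:
  assumes "w \<in> language XF"
  shows "set w \<subseteq> {0,1,2}"
proof -
  obtain x i where "x \<in> XF" and "w = map x [i..<i + length w]"
    using assms unfolding language_def by blast
  then show ?thesis by (metis XF_letters ex_map_conv subsetI)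
qed

lemma language_XF_zero_alternation:
  assumes "w \<in> language XF"
  shows "successively (\<lambda>a b. a \<noteq> b \<longrightarrow> (a = 0) \<noteq> (b = 0)) w"
proof -
  define m where "m = length w"
  obtain x i where x: "x \<in> XF" and w: "w = map x [i..<i + m]"
    using assms unfolding language_def m_def by blast
  show ?thesis
    unfolding w successively_conv_nth using XF_zero_alternation[OF x] by auto
qed

lemma language_XF_adjacent_repeats:
  assumes "w \<in> language XF" and "w \<noteq> []"
  shows "real (adjacent_repeats w) \<le> 100 + ln (real (length w))"
proof -
  define m where "m = length w"
  obtain x i where x: "x \<in> XF" and w: "w = map x [i..<i + m]"
    using assms(1) unfolding language_def m_def by blast
  have "adjacent_repeats w \<le> card {j. j < m \<and> x (i + j) = x (i + j + 1)}"
    unfolding adjacent_repeats_def w by (rule card_mono) auto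
  moreover have "m \<ge> 1" using assms(2) by (simp add: m_def Suc_le_eq)
  ultimately show ?thesis
    using XF_repeats_le[OF x, of m i] by (simp add: m_def)
qed

lemma GF_subset_language_XF: "GF \<subseteq> language XF"
proof
  fix v
  assume "v \<in> GF"
  then obtain as where v: "v = interleave_zeros as" and as: "set as \<subseteq> {1,2}"
    by (auto simp: GF_iff)
  define x where "x j = (if j < length v then v ! j else j mod 2)" for j
  have "x j \<in> {0,1,2} \<and> (x j = 0 \<longleftrightarrow> even j)" for j
  proof (cases "j < length v")
    case True
    with v have "j div 2 < length as" by simp
    with as have "as ! (j div 2) \<in> {1,2}" by (meson nth_mem subsetD)
    with True show ?thesis by (auto simp: x_def v interleave_zeros_nth)
  qed (auto simp: x_def)
  then have "x \<in> XF" by (intro zero_alternating_in_XF) auto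
  moreover have "v = map x [0..<0 + length v]"
    by (rule nth_equalityI) (simp_all add: x_def)
  ultimately show "v \<in> language XF" unfolding language_def by blast
qed

lemma Nil_in_language: "X \<noteq> {} \<Longrightarrow> [] \<in> language X"
  unfolding language_def by auto

lemma W_specification_GF: "W_specification GF (language XF)"
  unfolding W_specification_def
proof (intro exI[of _ 0] ballI bexI[of _ "[]"])
  show "[] \<in> language XF"
  proof (rule Nil_in_language)
    have "(\<lambda>j. j mod 2) \<in> XF" by (rule zero_alternating_in_XF) auto
    then show "XF \<noteq> {}" by blast
  qed
qed (simp add: GF_append)

section \<open>Edit approachability\<close>

lemma mono_nat_floor_ln: "mono (\<lambda>n::nat. c + nat \<lfloor>ln (real n)\<rfloor>)"
proof (rule monoI)
  fix m n :: nat
  assume "m \<le> n"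
  then have "ln (real m) \<le> ln (real n)"
    by (cases "m = 0"; cases "n = 0") auto
  then show "c + nat \<lfloor>ln (real m)\<rfloor> \<le> c + nat \<lfloor>ln (real n)\<rfloor>"
    by (simp add: floor_mono nat_mono)
qed

lemma nat_floor_ln_over_n_tendsto_0: "(\<lambda>n. real (c + nat \<lfloor>ln (real n)\<rfloor>) / real n) \<longlonglongrightarrow> 0"
proof (rule tendsto_sandwich[OF _ _ tendsto_const])
  show "\<forall>\<^sub>F n in sequentially. 0 \<le> real (c + nat \<lfloor>ln (real n)\<rfloor>) / real n"
    by simp
  show "\<forall>\<^sub>F n in sequentially.
          real (c + nat \<lfloor>ln (real n)\<rfloor>) / real n \<le> real c / real n + ln (real n) / real n"
  proof (rule eventually_sequentiallyI[of 1])
    fix n :: nat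
    assume "1 \<le> n"
    then have "real (nat \<lfloor>ln (real n)\<rfloor>) \<le> ln (real n)"
      by simp
    then show "real (c + nat \<lfloor>ln (real n)\<rfloor>) / real n \<le> real c / real n + ln (real n) / real n"
      by (simp add: add_divide_distrib divide_right_mono)
  qed
  show "(\<lambda>n. real c / real n + ln (real n) / real n) \<longlonglongrightarrow> 0"
    using tendsto_add[OF lim_const_over_n lim_ln_over_n] by simp
qed

lemma language_XF_edit_approachable: "edit_approachable (language XF) GF"
  unfolding edit_approachable_def
proof (intro exI conjI ballI)
  fix w
  assume w: "w \<in> language XF"
  have "successively (\<lambda>a b. (a = 0) \<noteq> (b = 0)) (remdups_adj w)"
    using w by (intro remdups_adj_zero_alternating language_XF_zero_alternation)
  moreover have "set (remdups_adj w) \<subseteq> {0,1,2}"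
    using language_XF_letters[OF w] by simp
  ultimately obtain v k where v: "v \<in> GF" "k \<le> 2" "(edit_step ^^ k) (remdups_adj w) v"
    by (rule zero_alternating_edit_GF)
  have "edit_dist w v \<le> adjacent_repeats w + k"
    by (rule edit_dist_le, rule relpowp_trans[OF edit_steps_remdups_adj v(3)])
  moreover have "adjacent_repeats w \<le> 100 + nat \<lfloor>ln (real (length w))\<rfloor>"
  proof (cases "w = []")
    case False
    then have "ln (real (length w)) \<ge> 0" by (simp add: Suc_le_eq)
    with language_XF_adjacent_repeats[OF w False] show ?thesis by linarith
  qed (simp add: adjacent_repeats_def)
  ultimately have "edit_dist w v \<le> 102 + nat \<lfloor>ln (real (length w))\<rfloor>"
    using v(2) by linarith
  with v(1) show "\<exists>v\<in>GF. edit_dist w v \<le> 102 + nat \<lfloor>ln (real (length w))\<rfloor>"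
    by blast
qed (rule mono_nat_floor_ln, rule nat_floor_ln_over_n_tendsto_0)

section \<open>Failure of the approximate product property\<close>

lemma approx_product_property_repeated_point:
  fixes X :: "'a set" and T :: "'a \<Rightarrow> 'a" and d :: "'a \<Rightarrow> 'a \<Rightarrow> real"
    and \<delta>1 \<delta>2 \<epsilon> :: real
  assumes "approx_product_property X T d" and "\<delta>1 > 0" and "\<delta>2 > 0" and "\<epsilon> > 0"
  obtains M where
    "\<And>(n::nat) (k::nat) (y::'a). real n \<ge> M \<Longrightarrow> k \<ge> 1 \<Longrightarrow> y \<in> X \<Longrightarrow>
       \<exists>t::nat \<Rightarrow> nat. \<exists>z\<in>X. t 0 = 0 \<and>
         (\<forall>i\<in>{1..k}. t (i - 1) + n \<le> t i \<and> real (t i - t (i - 1)) \<le> (1 + \<delta>1) * real n \<and>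
            real (card {j. j < n \<and> d ((T ^^ (t (i - 1) + j)) z) ((T ^^ j) y) > \<epsilon>}) < \<delta>2 * real n)"
proof -
  from assms(1)[unfolded approx_product_property_def, rule_format, OF assms(2-4)]
  obtain M where M: "\<forall>n::nat. real n \<ge> M \<longrightarrow> (\<forall>k::nat. k \<ge> 1 \<longrightarrow> (\<forall>xs::nat \<Rightarrow> 'a. (\<forall>i\<in>{1..k}. xs i \<in> X) \<longrightarrow>
         (\<exists>t::nat \<Rightarrow> nat. t 0 = 0 \<and>
            (\<forall>i\<in>{1..k}. t (i - 1) < t i \<and> n \<le> t i - t (i - 1) \<and>
                          real (t i - t (i - 1)) \<le> (1 + \<delta>1) * real n) \<and>
            (\<exists>z\<in>X. \<forall>i\<in>{1..k}.
               real (card {j. j < n \<and> d ((T ^^ (t (i - 1) + j)) z) ((T ^^ j) (xs i)) > \<epsilon>})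
                 < \<delta>2 * real n))))"
    by (elim exE conjE) (rule that)
  show ?thesis
  proof (rule that)
    fix n k :: nat and y
    assume "real n \<ge> M" "k \<ge> 1" "y \<in> X"
    from M[rule_format, OF this(1,2), of "\<lambda>_. y"] this(3) obtain t z where t0: "t 0 = 0" and z: "z \<in> X"
      and steps: "\<forall>i\<in>{1..k}. t (i - 1) < t i \<and> n \<le> t i - t (i - 1) \<and>
                          real (t i - t (i - 1)) \<le> (1 + \<delta>1) * real n"
      and close: "\<forall>i\<in>{1..k}.
               real (card {j. j < n \<and> d ((T ^^ (t (i - 1) + j)) z) ((T ^^ j) y) > \<epsilon>})
                 < \<delta>2 * real n"
      by (auto simp only: Ball_def)
    show "\<exists>t. \<exists>z\<in>X. t 0 = 0 \<and>
         (\<forall>i\<in>{1..k}. t (i - 1) + n \<le> t i \<and> real (t i - t (i - 1)) \<le> (1 + \<delta>1) * real n \<and>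
            real (card {j. j < n \<and> d ((T ^^ (t (i - 1) + j)) z) ((T ^^ j) y) > \<epsilon>}) < \<delta>2 * real n)"
    proof (intro exI[of _ t] bexI[of _ z] conjI ballI)
      fix i
      assume i: "i \<in> {1..k}"
      show "t (i - 1) + n \<le> t i" and "real (t i - t (i - 1)) \<le> (1 + \<delta>1) * real n"
        using steps[rule_format, OF i] by linarith+
      show "real (card {j. j < n \<and> d ((T ^^ (t (i - 1) + j)) z) ((T ^^ j) y) > \<epsilon>}) < \<delta>2 * real n"
        using close i by blast
    qed (use t0 z in auto)
  qed
qed

lemma card_ge_if_every_block_hit:
  fixes t :: "nat \<Rightarrow> nat"
  assumes "\<forall>i\<in>{1..k}. \<exists>j. t (i - 1) \<le> j \<and> j < t i \<and> P j"
  shows "k \<le> card {j. j < t k \<and> P j}"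
  using assms
proof (induction k)
  case (Suc k)
  have "Suc k \<in> {1..Suc k}" by simp
  from Suc.prems[rule_format, OF this]
  obtain j0 where j0: "t k \<le> j0" "j0 < t (Suc k)" "P j0" by auto
  have "\<forall>i\<in>{1..k}. \<exists>j. t (i - 1) \<le> j \<and> j < t i \<and> P j" using Suc.prems by simp
  with Suc.IH have "k \<le> card {j. j < t k \<and> P j}" by simp
  also have "\<dots> < card (insert j0 {j. j < t k \<and> P j})"
    using j0(1) by (subst card_insert_disjoint) auto
  also have "\<dots> \<le> card {j. j < t (Suc k) \<and> P j}"
    using j0 by (intro card_mono) auto
  finally show ?case by simp
qed simp

lemma bounded_increments_le:
  fixes t :: "nat \<Rightarrow> nat"
  assumes "\<forall>i\<in>{1..k}. t i \<le> t (i - 1) + c"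
  shows "t k \<le> t 0 + c * k"
  using assms
proof (induction k)
  case (Suc k)
  have "Suc k \<in> {1..Suc k}" by simp
  with Suc.prems have "t (Suc k) \<le> t k + c" by fastforce
  moreover have "t k \<le> t 0 + c * k" using Suc by simp
  ultimately show ?case by simp
qed simp

lemma ln_less_half: "(x::real) > 0 \<Longrightarrow> ln x < x / 2"
proof -
  assume "x > 0"
  then have "ln x = ln 2 + ln (x / 2)" by (simp add: ln_div)
  also have "ln (x / 2) \<le> x / 2 - 1" using \<open>x > 0\<close> by (intro ln_le_minus_one) simp
  finally show ?thesis using ln_2_less_1 by linarith
qed

lemma shift_power: "(shift ^^ m) x = (\<lambda>j. x (m + j))"
  by (induction m) (auto simp: shift_def)

lemma seq_metric_ge_first_coordinate:
  assumes "\<forall>j. a j \<le> C" and "\<forall>j. b j \<le> C"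
  shows "\<bar>real (a 0) - real (b 0)\<bar> / 2 \<le> seq_metric a b"
proof -
  define f where "f j = \<bar>real (a j) - real (b j)\<bar> / 2 ^ Suc j" for j
  have bound: "norm (f j) \<le> real C * (1/2) ^ j" for j
  proof -
    have "real (a j) \<le> real C" "real (b j) \<le> real C" using assms by simp_all
    then have "\<bar>real (a j) - real (b j)\<bar> \<le> real C" by linarith
    then have "f j \<le> real C / 2 ^ Suc j" unfolding f_def by (simp add: divide_right_mono)
    also have "\<dots> \<le> real C * (1/2) ^ j" by (simp add: field_simps)
    finally show ?thesis by (simp add: f_def)
  qed
  have "summable (\<lambda>j. real C * (1/2) ^ j)"
    by (intro summable_mult summable_geometric) simp
  then have "summable f"
    by (rule summable_comparison_test') (rule bound)
  then have "sum f {0} \<le> suminf f"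
    by (rule sum_le_suminf) (auto simp: f_def)
  then show ?thesis unfolding seq_metric_def f_def by simp
qed

definition slipped_alternation :: "nat \<Rightarrow> nat \<Rightarrow> nat" where
  "slipped_alternation N j = (if j < N then j mod 2 else Suc j mod 2)"

lemma slipped_alternation_zero_iff: "slipped_alternation N j = 0 \<longleftrightarrow> (even j \<longleftrightarrow> j < N)"
  by (simp add: slipped_alternation_def flip: even_iff_mod_2_eq_zero)

lemma slipped_alternation_in_XF: "slipped_alternation N \<in> XF"
proof (rule XF_intro_finite_repeats)
  have letters: "slipped_alternation N j \<in> {0,1}" for j
    by (auto simp: slipped_alternation_def)
  then show "\<forall>j. slipped_alternation N j \<in> {0,1,2}"
    by (metis insertCI insertE)
  show "\<forall>j. (slipped_alternation N j, slipped_alternation N (Suc j)) \<notin> {(1,2),(2,1)}"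
  proof
    fix j
    show "(slipped_alternation N j, slipped_alternation N (Suc j)) \<notin> {(1,2),(2,1)}"
      using letters[of j] letters[of "Suc j"] by auto
  qed
  have repeats: "{j. slipped_alternation N j = slipped_alternation N (Suc j)} \<subseteq> {N - 1}"
    by (auto simp: slipped_alternation_def split: if_splits) presburger+
  then show "finite {j. slipped_alternation N j = slipped_alternation N (Suc j)}"
    by (rule finite_subset) simp
  from repeats have "card {j. slipped_alternation N j = slipped_alternation N (Suc j)} \<le> card {N - 1}"
    by (intro card_mono) simp_all
  then show "card {j. slipped_alternation N j = slipped_alternation N (Suc j)} \<le> 100"
    by simp
qed

lemma zero_pattern_on_window:
  assumes "\<forall>j. Suc j < n \<longrightarrow> (z (s + j) = 0) \<noteq> (z (s + Suc j) = 0)" and "j < n"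
  shows "z (s + j) = 0 \<longleftrightarrow> (z s = 0 \<longleftrightarrow> even j)"
  using assms(2)
proof (induction j)
  case (Suc j)
  with assms(1) show ?case by auto
qed simp

lemma window_mismatch_slipped_alternation:
  assumes "\<forall>j. Suc j < n \<longrightarrow> (z (s + j) = 0) \<noteq> (z (s + Suc j) = 0)"
  shows "n div 2 \<le> card {j. j < n \<and> z (s + j) \<noteq> slipped_alternation (n div 2) j}"
proof -
  let ?mismatch = "{j. j < n \<and> z (s + j) \<noteq> slipped_alternation (n div 2) j}"
  have zero_iff: "z (s + j) = 0 \<longleftrightarrow> (z s = 0 \<longleftrightarrow> even j)" if "j < n" for j
    by (rule zero_pattern_on_window[OF assms that])
  show ?thesis
  proof (cases "z s = 0")
    case True
    have "{n div 2..<n} \<subseteq> ?mismatch"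
    proof
      fix j
      assume j: "j \<in> {n div 2..<n}"
      then have "(z (s + j) = 0) \<noteq> (slipped_alternation (n div 2) j = 0)"
        using zero_iff[of j] True by (simp add: slipped_alternation_zero_iff)
      with j show "j \<in> ?mismatch" by auto
    qed
    then have "card {n div 2..<n} \<le> card ?mismatch" by (intro card_mono) auto
    then show ?thesis by simp
  next
    case False
    have "{..<n div 2} \<subseteq> ?mismatch"
    proof
      fix j
      assume j: "j \<in> {..<n div 2}"
      then have "(z (s + j) = 0) \<noteq> (slipped_alternation (n div 2) j = 0)"
        using zero_iff[of j] False by (simp add: slipped_alternation_zero_iff)
      with j show "j \<in> ?mismatch" by auto
    qed
    then have "card {..<n div 2} \<le> card ?mismatch" by (intro card_mono) auto
    then show ?thesis by simp
  qed
qed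

lemma XF_tracking_slipped_alternation_has_repeat:
  fixes z :: "nat \<Rightarrow> nat"
  assumes z: "z \<in> XF" and n: "n \<ge> 2"
    and track: "real (card {j. j < n \<and> seq_metric ((shift ^^ (s + j)) z)
                   ((shift ^^ j) (slipped_alternation (n div 2))) > 1/4}) < 1/4 * real n"
  shows "\<exists>j. s \<le> j \<and> j < s + n \<and> z j = z (Suc j)"
proof (rule ccontr)
  let ?y = "slipped_alternation (n div 2)"
  let ?bad = "{j. j < n \<and> seq_metric ((shift ^^ (s + j)) z) ((shift ^^ j) ?y) > 1/4}"
  assume no_repeat: "\<not> ?thesis"
  have "\<forall>j. Suc j < n \<longrightarrow> (z (s + j) = 0) \<noteq> (z (s + Suc j) = 0)"
  proof (intro allI impI)
    fix j
    assume "Suc j < n"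
    with no_repeat have "z (s + j) \<noteq> z (Suc (s + j))" by force
    with XF_zero_alternation[OF z] show "(z (s + j) = 0) \<noteq> (z (s + Suc j) = 0)" by simp
  qed
  then have "n div 2 \<le> card {j. j < n \<and> z (s + j) \<noteq> ?y j}"
    by (rule window_mismatch_slipped_alternation)
  also have "\<dots> \<le> card ?bad"
  proof (rule card_mono)
    show "{j. j < n \<and> z (s + j) \<noteq> ?y j} \<subseteq> ?bad"
    proof
      fix j
      assume j: "j \<in> {j. j < n \<and> z (s + j) \<noteq> ?y j}"
      have "\<forall>i. z (s + j + i) \<le> 2" "\<forall>i. ?y (j + i) \<le> 2"
        using XF_le_2[OF z] by (auto simp: slipped_alternation_def)
      moreover have "1 \<le> \<bar>real (z (s + j)) - real (?y j)\<bar>"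
        using j nat_less_real_le[of "z (s + j)" "?y j"] nat_less_real_le[of "?y j" "z (s + j)"]
        by (auto simp: linorder_neq_iff)
      ultimately have "1/2 \<le> seq_metric (\<lambda>i. z (s + j + i)) (\<lambda>i. ?y (j + i))"
        using seq_metric_ge_first_coordinate[of "\<lambda>i. z (s + j + i)" 2 "\<lambda>i. ?y (j + i)"] by simp
      with j show "j \<in> ?bad" by (simp add: shift_power add.assoc)
    qed
  qed simp
  finally have "real (n div 2) < 1/4 * real n"
    using track by linarith
  moreover have "n \<le> 4 * (n div 2)" using n by linarith
  ultimately show False by linarith
qed

lemma ln_budget_lt_linear: "n \<ge> 1 \<Longrightarrow> 100 + ln (real (2 * n * (4 * n + 204))) < real (4 * n + 204)"
proof -
  assume n: "n \<ge> 1"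
  define k where "k = 4 * n + 204"
  have "ln (real (2 * n * k)) = ln (2 * real n) + ln (real k)"
    using n by (simp add: k_def ln_mult)
  moreover have "ln (2 * real n) < 2 * real n" using n by (intro ln_less_self) simp
  moreover have "ln (real k) < real k / 2" by (intro ln_less_half) (simp add: k_def)
  ultimately show ?thesis unfolding k_def by simp
qed

lemma XF_shadowing_slipped_alternation_repeats:
  assumes z: "z \<in> XF" and n: "n \<ge> 2"
    and blocks: "\<forall>i\<in>{1..k}. t (i - 1) + n \<le> t i \<and>
      real (card {j. j < n \<and> seq_metric ((shift ^^ (t (i - 1) + j)) z)
                    ((shift ^^ j) (slipped_alternation (n div 2))) > 1/4}) < 1/4 * real n"
  shows "k \<le> card {j. j < t k \<and> z j = z (Suc j)}"
proof (rule card_ge_if_every_block_hit, rule ballI)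
  fix i
  assume "i \<in> {1..k}"
  note block = blocks[rule_format, OF this]
  from XF_tracking_slipped_alternation_has_repeat[OF z n] block
  obtain j where "t (i - 1) \<le> j" "j < t (i - 1) + n" "z j = z (Suc j)" by blast
  with block show "\<exists>j. t (i - 1) \<le> j \<and> j < t i \<and> z j = z (Suc j)"
    by (intro exI[of _ j]) linarith
qed

lemma not_approx_product_property_XF: "\<not> approx_product_property XF shift seq_metric"
proof
  assume "approx_product_property XF shift seq_metric"
  then obtain M where M: "\<And>(n::nat) (k::nat) y. real n \<ge> M \<Longrightarrow> k \<ge> 1 \<Longrightarrow> y \<in> XF \<Longrightarrow>
       \<exists>t::nat \<Rightarrow> nat. \<exists>z\<in>XF. t 0 = 0 \<and>
         (\<forall>i\<in>{1..k}. t (i - 1) + n \<le> t i \<and> real (t i - t (i - 1)) \<le> (1 + 1) * real n \<and>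
            real (card {j. j < n \<and> seq_metric ((shift ^^ (t (i - 1) + j)) z) ((shift ^^ j) y) > 1/4})
              < 1/4 * real n)"
    by (rule approx_product_property_repeated_point[of XF shift seq_metric 1 "1/4" "1/4"])
       (simp, simp, simp, rule that)
  define n where "n = nat \<lceil>M\<rceil> + 2"
  define k where "k = 4 * n + 204"
  have n: "real n \<ge> M" "n \<ge> 2" and k: "k \<ge> 1"
    unfolding n_def k_def by linarith+
  from M[OF n(1) k slipped_alternation_in_XF[of "n div 2"]]
  obtain t z where z: "z \<in> XF" and t0: "t 0 = 0"
    and blocks: "\<forall>i\<in>{1..k}. t (i - 1) + n \<le> t i \<and> real (t i - t (i - 1)) \<le> (1 + 1) * real n \<and>
            real (card {j. j < n \<and> seq_metric ((shift ^^ (t (i - 1) + j)) z)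
                          ((shift ^^ j) (slipped_alternation (n div 2))) > 1/4}) < 1/4 * real n"
    by (elim exE bexE conjE)
  have repeats: "k \<le> card {j. j < t k \<and> z j = z (Suc j)}"
    using XF_shadowing_slipped_alternation_repeats[OF z n(2)] blocks by blast
  have "\<forall>i\<in>{1..k}. t i \<le> t (i - 1) + 2 * n"
  proof
    fix i
    assume "i \<in> {1..k}"
    then have "real (t i - t (i - 1)) \<le> real (2 * n)" using blocks by simp
    then show "t i \<le> t (i - 1) + 2 * n" by (simp only: of_nat_le_iff)
  qed
  then have t_k_le: "t k \<le> 2 * n * k"
    using bounded_increments_le[of k t "2 * n"] t0 by simp
  have t_k_ge: "t k \<ge> 1"
    using blocks[rule_format, of k] k n(2) by simp
  have "real k \<le> 100 + ln (real (t k))"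
    using XF_repeats_le[OF z t_k_ge, of 0] repeats by simp
  also have "\<dots> \<le> 100 + ln (real (2 * n * k))"
    using t_k_ge t_k_le by (intro add_left_mono ln_mono) (simp_all del: of_nat_mult)
  also have "\<dots> < real k"
    using ln_budget_lt_linear[of n] n(2) unfolding k_def by simp
  finally show False by simp
qed

theorem proposition6p1:
  shows "GF \<subseteq> language XF \<and> W_specification GF (language XF) \<and>
         edit_approachable (language XF) GF \<and>
         \<not> approx_product_property XF shift seq_metric"
  using GF_subset_language_XF W_specification_GF language_XF_edit_approachable
    not_approx_product_property_XF
  by blast

end
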